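(* Let $(L_i)_{i\in I}$ be a family of lattices with zero such that $L_i\cap L_j=\{0\}$ for all distinct $i,j\in I$, and let $L=\coprod^0_{i\in I}L_i$, with each $L_i$ identified with its canonical copy in $L$; put $P=\bigcup_{i\in I}L_i\subseteq L$. Adjoin a new largest element $\infty$ to $L$ and set $\overline{L}_i=L_i\cup\{\infty\}$. Then for each $x\in L$ and each $i\in I$ there exist a largest element $x_{(i)}$ of $L_i$ below $x$ and a least element $x^{(i)}$ of $\overline{L}_i$ above $x$ (with respect to the ordering of $L\cup\{\infty\}$), and for all $x,y\in L$ and $i\in I$: (a) $p_{(i)}=p^{(i)}=p$ if $p\in L_i$; (b) $p_{(i)}=0$ and $p^{(i)}=\infty$ if $p\in P\setminus L_i$; (c) $(x\vee y)_{(i)}=x_{(i)}\vee y_{(i)}$ and $(x\wedge y)_{(i)}=x_{(i)}\wedge y_{(i)}$; (d) $(x\vee y)^{(i)}=x^{(i)}\vee y^{(i)}$; (e) $(x\wedge y)^{(i)}=0$ if $x^{(j)}\wedge y^{(j)}=0$ for some $j\in I$, and $(x\wedge y)^{(i)}=x^{(i)}\wedge y^{(i)}$ otherwise. (Joins and meets on the right-hand sides are computed in $\overline{L}_i$, where $\infty$ is the top element.)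
   Context: $\coprod^0_{i\in I}L_i$ denotes the coproduct of a family of lattices with zero in the category of lattices with zero and zero-preserving lattice homomorphisms; the canonical maps $L_i\to L$ are embeddings and identify the zeros of all $L_i$. *)

theory Defs
  imports "HOL-Algebra.Lattice"
begin

text \<open>The coproduct (in the category of
lattices with zero) of a family of lattices with a common zero z, pairwise meeting
only in z, is the lattice presented by the generators in the union P of the
carriers (together with z), subject to the relations of each L_i (joins and meets
of elements of L_i agree with those computed in L_i) and z being least.
An element of the coproduct is represented by a term; two terms denote the same
element iff they are related both ways by cop_le.\<close>

datatype 'a lterm = Gen 'a | Join "'a lterm" "'a lterm" | Meet "'a lterm" "'a lterm"

fun gens :: "'a lterm \<Rightarrow> 'a set" where
  "gens (Gen a) = {a}"
| "gens (Join s t) = gens s \<union> gens t"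
| "gens (Meet s t) = gens s \<union> gens t"

definition cop_gens :: "'i set \<Rightarrow> ('i \<Rightarrow> 'a gorder) \<Rightarrow> 'a \<Rightarrow> 'a set" where
  "cop_gens I Ls z = insert z (\<Union>i\<in>I. carrier (Ls i))"

definition cop_terms :: "'i set \<Rightarrow> ('i \<Rightarrow> 'a gorder) \<Rightarrow> 'a \<Rightarrow> 'a lterm set" where
  "cop_terms I Ls z = {t. gens t \<subseteq> cop_gens I Ls z}"

inductive cop_le :: "'i set \<Rightarrow> ('i \<Rightarrow> 'a gorder) \<Rightarrow> 'a \<Rightarrow> 'a lterm \<Rightarrow> 'a lterm \<Rightarrow> bool"
  for I Ls z where
  refl: "cop_le I Ls z t t"
| trans: "cop_le I Ls z s t \<Longrightarrow> cop_le I Ls z t u \<Longrightarrow> cop_le I Ls z s u"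
| join_ub1: "cop_le I Ls z s (Join s t)"
| join_ub2: "cop_le I Ls z t (Join s t)"
| join_lub: "cop_le I Ls z s u \<Longrightarrow> cop_le I Ls z t u \<Longrightarrow> cop_le I Ls z (Join s t) u"
| meet_lb1: "cop_le I Ls z (Meet s t) s"
| meet_lb2: "cop_le I Ls z (Meet s t) t"
| meet_glb: "cop_le I Ls z u s \<Longrightarrow> cop_le I Ls z u t \<Longrightarrow> cop_le I Ls z u (Meet s t)"
| gen_join1: "i \<in> I \<Longrightarrow> a \<in> carrier (Ls i) \<Longrightarrow> b \<in> carrier (Ls i) \<Longrightarrow>
     cop_le I Ls z (Gen (a \<squnion>\<^bsub>Ls i\<^esub> b)) (Join (Gen a) (Gen b))"
| gen_join2: "i \<in> I \<Longrightarrow> a \<in> carrier (Ls i) \<Longrightarrow> b \<in> carrier (Ls i) \<Longrightarrow>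
     cop_le I Ls z (Join (Gen a) (Gen b)) (Gen (a \<squnion>\<^bsub>Ls i\<^esub> b))"
| gen_meet1: "i \<in> I \<Longrightarrow> a \<in> carrier (Ls i) \<Longrightarrow> b \<in> carrier (Ls i) \<Longrightarrow>
     cop_le I Ls z (Gen (a \<sqinter>\<^bsub>Ls i\<^esub> b)) (Meet (Gen a) (Gen b))"
| gen_meet2: "i \<in> I \<Longrightarrow> a \<in> carrier (Ls i) \<Longrightarrow> b \<in> carrier (Ls i) \<Longrightarrow>
     cop_le I Ls z (Meet (Gen a) (Gen b)) (Gen (a \<sqinter>\<^bsub>Ls i\<^esub> b))"
| zero_least: "cop_le I Ls z (Gen z) t"

text \<open>L \<union> {\<infinity>}: None is the new top \<infinity>, Some a is the element (Gen a) of L.\<close>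
definition cop_le_top :: "'i set \<Rightarrow> ('i \<Rightarrow> 'a gorder) \<Rightarrow> 'a \<Rightarrow> 'a lterm \<Rightarrow> 'a option \<Rightarrow> bool" where
  "cop_le_top I Ls z x u = (case u of None \<Rightarrow> True | Some a \<Rightarrow> cop_le I Ls z x (Gen a))"

definition is_lower_proj :: "'i set \<Rightarrow> ('i \<Rightarrow> 'a gorder) \<Rightarrow> 'a \<Rightarrow> 'i \<Rightarrow> 'a lterm \<Rightarrow> 'a \<Rightarrow> bool" where
  "is_lower_proj I Ls z i x a \<longleftrightarrow> a \<in> carrier (Ls i) \<and> cop_le I Ls z (Gen a) x \<and>
     (\<forall>b\<in>carrier (Ls i). cop_le I Ls z (Gen b) x \<longrightarrow> cop_le I Ls z (Gen b) (Gen a))"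

definition ole_top :: "'i set \<Rightarrow> ('i \<Rightarrow> 'a gorder) \<Rightarrow> 'a \<Rightarrow> 'a option \<Rightarrow> 'a option \<Rightarrow> bool" where
  "ole_top I Ls z u v = (case v of None \<Rightarrow> True
      | Some b \<Rightarrow> (case u of None \<Rightarrow> False | Some a \<Rightarrow> cop_le I Ls z (Gen a) (Gen b)))"

definition bar_carrier :: "'a gorder \<Rightarrow> 'a option set" where
  "bar_carrier K = insert None (Some ` carrier K)"

definition is_upper_proj :: "'i set \<Rightarrow> ('i \<Rightarrow> 'a gorder) \<Rightarrow> 'a \<Rightarrow> 'i \<Rightarrow> 'a lterm \<Rightarrow> 'a option \<Rightarrow> bool" where
  "is_upper_proj I Ls z i x u \<longleftrightarrow> u \<in> bar_carrier (Ls i) \<and> cop_le_top I Ls z x u \<and>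
     (\<forall>v\<in>bar_carrier (Ls i). cop_le_top I Ls z x v \<longrightarrow> ole_top I Ls z u v)"

definition ojoin :: "'a gorder \<Rightarrow> 'a option \<Rightarrow> 'a option \<Rightarrow> 'a option" where
  "ojoin K u v = (case (u, v) of (Some a, Some b) \<Rightarrow> Some (a \<squnion>\<^bsub>K\<^esub> b) | _ \<Rightarrow> None)"

definition omeet :: "'a gorder \<Rightarrow> 'a option \<Rightarrow> 'a option \<Rightarrow> 'a option" where
  "omeet K u v = (case (u, v) of (None, _) \<Rightarrow> v | (_, None) \<Rightarrow> u
                    | (Some a, Some b) \<Rightarrow> Some (a \<sqinter>\<^bsub>K\<^esub> b))"

end

theory Submission
  imports Defs
begin

text \<open>Both projections can be computed by structural recursion on terms. The lower
projection x_(i) commutes with joins and meets and sends generators outside L_i to 0. The upper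
projection x^(i) commutes with joins and meets in L_i \<union> {\<infinity>} and sends generators outside L_i
to \<infinity>, except that a meet is sent to 0 as soon as the meet of its upper projections is 0 for a
single index, because then it already lies below 0 in L. Both recursions respect every defining
relation of the coproduct, hence are monotone on L, and together with Gen x_(i) \<le> x \<le> x^(i)
and the fact that L induces the given order on each L_i this makes them the adjoints of the
inclusions L_i \<subseteq> L and L_i \<union> {\<infinity>} \<subseteq> L \<union> {\<infinity>}. Hence the extremal elements exist, are
unique, and (a)--(e) are just the recursion equations.\<close>

definition bar_le :: "'a gorder \<Rightarrow> 'a option \<Rightarrow> 'a option \<Rightarrow> bool" where
  "bar_le K u v = (case v of None \<Rightarrow> True
      | Some b \<Rightarrow> (case u of None \<Rightarrow> False | Some a \<Rightarrow> a \<sqsubseteq>\<^bsub>K\<^esub> b))"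

lemma bar_le_None [simp]: "bar_le K u None"
  and None_bar_le_Some [simp]: "\<not> bar_le K None (Some b)"
  and Some_bar_le_Some [simp]: "bar_le K (Some a) (Some b) \<longleftrightarrow> a \<sqsubseteq>\<^bsub>K\<^esub> b"
  by (simp_all add: bar_le_def)

lemma None_in_bar_carrier [simp]: "None \<in> bar_carrier K"
  and Some_in_bar_carrier [simp]: "Some a \<in> bar_carrier K \<longleftrightarrow> a \<in> carrier K"
  by (auto simp: bar_carrier_def)

locale zero_lattice = lattice L for L :: "'a gorder" (structure) +
  fixes z :: 'a
  assumes least_zero: "least L z (carrier L)"
begin

lemma zero_closed [simp]: "z \<in> carrier L"
  using least_zero by (simp add: least_def)

lemma zero_le: "a \<in> carrier L \<Longrightarrow> z \<sqsubseteq> a"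
  using least_zero by (simp add: least_def)

lemma zero_join [simp]: "a \<in> carrier L \<Longrightarrow> z \<squnion> a = a"
  using le_iff_meet[OF zero_closed] zero_le by blast

lemma meet_zero [simp]: "a \<in> carrier L \<Longrightarrow> z \<sqinter> a = z" "a \<in> carrier L \<Longrightarrow> a \<sqinter> z = z"
  using le_iff_join[OF zero_closed] zero_le meet_comm by metis+

lemma join_eq_zero_iff:
  assumes "a \<in> carrier L" "b \<in> carrier L"
  shows "a \<squnion> b = z \<longleftrightarrow> a = z \<and> b = z"
proof
  assume "a \<squnion> b = z"
  then have "a \<sqsubseteq> z" "b \<sqsubseteq> z"
    using join_left join_right assms by metis+
  then show "a = z \<and> b = z"
    using le_antisym zero_le assms by auto
qed simp

lemma bar_le_refl: "u \<in> bar_carrier L \<Longrightarrow> bar_le L u u"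
  by (cases u) auto

lemma bar_le_trans:
  "\<lbrakk>bar_le L u v; bar_le L v w; u \<in> bar_carrier L; v \<in> bar_carrier L; w \<in> bar_carrier L\<rbrakk>
   \<Longrightarrow> bar_le L u w"
  by (cases u; cases v; cases w) (auto intro: le_trans)

lemma bar_le_antisym:
  "\<lbrakk>bar_le L u v; bar_le L v u; u \<in> bar_carrier L; v \<in> bar_carrier L\<rbrakk> \<Longrightarrow> u = v"
  by (cases u; cases v) auto

lemma zero_bar_le: "u \<in> bar_carrier L \<Longrightarrow> bar_le L (Some z) u"
  by (cases u) (auto simp: zero_le)

lemma bar_le_zero_iff: "u \<in> bar_carrier L \<Longrightarrow> bar_le L u (Some z) \<longleftrightarrow> u = Some z"
  by (cases u) (auto simp: zero_le)

lemma ojoin_closed: "u \<in> bar_carrier L \<Longrightarrow> v \<in> bar_carrier L \<Longrightarrow> ojoin L u v \<in> bar_carrier L"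
  and omeet_closed: "u \<in> bar_carrier L \<Longrightarrow> v \<in> bar_carrier L \<Longrightarrow> omeet L u v \<in> bar_carrier L"
  by (cases u; cases v; simp add: ojoin_def omeet_def)+

lemma ojoin_upper:
  "u \<in> bar_carrier L \<Longrightarrow> v \<in> bar_carrier L \<Longrightarrow> bar_le L u (ojoin L u v)"
  "u \<in> bar_carrier L \<Longrightarrow> v \<in> bar_carrier L \<Longrightarrow> bar_le L v (ojoin L u v)"
  by (cases u; cases v; simp add: ojoin_def join_left join_right)+

lemma ojoin_least:
  "\<lbrakk>bar_le L u w; bar_le L v w; u \<in> bar_carrier L; v \<in> bar_carrier L; w \<in> bar_carrier L\<rbrakk>
   \<Longrightarrow> bar_le L (ojoin L u v) w"
  by (cases u; cases v; cases w) (auto simp: ojoin_def join_le)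

lemma omeet_lower:
  "u \<in> bar_carrier L \<Longrightarrow> v \<in> bar_carrier L \<Longrightarrow> bar_le L (omeet L u v) u"
  "u \<in> bar_carrier L \<Longrightarrow> v \<in> bar_carrier L \<Longrightarrow> bar_le L (omeet L u v) v"
  by (cases u; cases v; simp add: omeet_def meet_left meet_right)+

lemma omeet_greatest:
  "\<lbrakk>bar_le L w u; bar_le L w v; u \<in> bar_carrier L; v \<in> bar_carrier L; w \<in> bar_carrier L\<rbrakk>
   \<Longrightarrow> bar_le L w (omeet L u v)"
  by (cases u; cases v; cases w) (auto simp: omeet_def meet_le)

end

primrec lower_proj :: "'a gorder \<Rightarrow> 'a \<Rightarrow> 'a lterm \<Rightarrow> 'a" where
  "lower_proj K z (Gen a) = (if a \<in> carrier K then a else z)"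
| "lower_proj K z (Join x y) = lower_proj K z x \<squnion>\<^bsub>K\<^esub> lower_proj K z y"
| "lower_proj K z (Meet x y) = lower_proj K z x \<sqinter>\<^bsub>K\<^esub> lower_proj K z y"

primrec upper_proj :: "'i set \<Rightarrow> ('i \<Rightarrow> 'a gorder) \<Rightarrow> 'a \<Rightarrow> 'i \<Rightarrow> 'a lterm \<Rightarrow> 'a option" where
  "upper_proj I Ls z i (Gen a) = (if a \<in> carrier (Ls i) then Some a else None)"
| "upper_proj I Ls z i (Join x y) = ojoin (Ls i) (upper_proj I Ls z i x) (upper_proj I Ls z i y)"
| "upper_proj I Ls z i (Meet x y) =
     (if \<exists>j\<in>I. omeet (Ls j) (upper_proj I Ls z j x) (upper_proj I Ls z j y) = Some z then Some z
      else omeet (Ls i) (upper_proj I Ls z i x) (upper_proj I Ls z i y))"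

lemma (in zero_lattice) lower_proj_closed: "lower_proj L z x \<in> carrier L"
  by (induction x) auto

lemma cop_le_Join_mono: "cop_le I Ls z s s' \<Longrightarrow> cop_le I Ls z t t' \<Longrightarrow> cop_le I Ls z (Join s t) (Join s' t')"
  by (meson cop_le.join_lub cop_le.join_ub1 cop_le.join_ub2 cop_le.trans)

lemma cop_le_Meet_mono: "cop_le I Ls z s s' \<Longrightarrow> cop_le I Ls z t t' \<Longrightarrow> cop_le I Ls z (Meet s t) (Meet s' t')"
  by (meson cop_le.meet_glb cop_le.meet_lb1 cop_le.meet_lb2 cop_le.trans)

lemmas [trans] = cop_le.trans

locale zero_lattice_family =
  fixes I :: "'i set" and Ls :: "'i \<Rightarrow> 'a gorder" and z :: 'a
  assumes lattice: "\<And>i. i \<in> I \<Longrightarrow> lattice (Ls i)"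
    and least_zero: "\<And>i. i \<in> I \<Longrightarrow> least (Ls i) z (carrier (Ls i))"
    and carrier_disjoint: "\<And>i j. \<lbrakk>i \<in> I; j \<in> I; i \<noteq> j\<rbrakk> \<Longrightarrow> carrier (Ls i) \<inter> carrier (Ls j) = {z}"
begin

lemma zero_lattice_component: "i \<in> I \<Longrightarrow> zero_lattice (Ls i) z"
  by (simp add: zero_lattice_def zero_lattice_axioms_def lattice least_zero)

abbreviation below :: "'a lterm \<Rightarrow> 'a lterm \<Rightarrow> bool" (infix "\<preceq>" 50) where
  "s \<preceq> t \<equiv> cop_le I Ls z s t"

abbreviation lproj :: "'i \<Rightarrow> 'a lterm \<Rightarrow> 'a" where
  "lproj i \<equiv> lower_proj (Ls i) z"

abbreviation uproj :: "'i \<Rightarrow> 'a lterm \<Rightarrow> 'a option" where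
  "uproj \<equiv> upper_proj I Ls z"

lemma zero_in_carrier [simp]: "i \<in> I \<Longrightarrow> z \<in> carrier (Ls i)"
  using zero_lattice.zero_closed[OF zero_lattice_component] .

lemma lower_proj_in_carrier: "i \<in> I \<Longrightarrow> lproj i x \<in> carrier (Ls i)"
  using zero_lattice.lower_proj_closed[OF zero_lattice_component] .

lemma mem_other_carrier_iff:
  "\<lbrakk>i \<in> I; k \<in> I; i \<noteq> k; c \<in> carrier (Ls k)\<rbrakk> \<Longrightarrow> c \<in> carrier (Ls i) \<longleftrightarrow> c = z"
  using carrier_disjoint[of i k] by auto

lemma upper_proj_closed: "i \<in> I \<Longrightarrow> uproj i x \<in> bar_carrier (Ls i)"
  by (induction x arbitrary: i)
    (simp_all add: zero_lattice.ojoin_closed[OF zero_lattice_component]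
      zero_lattice.omeet_closed[OF zero_lattice_component])

lemma upper_proj_eq_zero_transfer:
  "\<lbrakk>i \<in> I; j \<in> I; uproj j x = Some z\<rbrakk> \<Longrightarrow> uproj i x = Some z"
proof (induction x arbitrary: i)
  case (Gen a)
  then show ?case by (simp split: if_splits)
next
  case (Join x y)
  interpret J: zero_lattice "Ls j" z using Join.prems by (blast intro: zero_lattice_component)
  interpret K: zero_lattice "Ls i" z using Join.prems by (blast intro: zero_lattice_component)
  obtain a b where ab: "uproj j x = Some a" "uproj j y = Some b" "a \<squnion>\<^bsub>Ls j\<^esub> b = z"
    using Join.prems(3) by (simp add: ojoin_def split: option.splits)
  moreover have "a \<in> carrier (Ls j)" "b \<in> carrier (Ls j)"
    using upper_proj_closed[OF Join.prems(2), of x] upper_proj_closed[OF Join.prems(2), of y] ab by auto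
  ultimately have "uproj j x = Some z" "uproj j y = Some z"
    using J.join_eq_zero_iff by auto
  then have "uproj i x = Some z" "uproj i y = Some z"
    using Join.IH Join.prems(1,2) by blast+
  then show ?case by (simp add: ojoin_def)
next
  case (Meet x y)
  from Meet.prems(2,3) have "\<exists>k\<in>I. omeet (Ls k) (uproj k x) (uproj k y) = Some z"
    by (cases "\<exists>k\<in>I. omeet (Ls k) (uproj k x) (uproj k y) = Some z") auto
  then show ?case by simp
qed

lemma lower_proj_Gen_other:
  "\<lbrakk>i \<in> I; k \<in> I; i \<noteq> k; c \<in> carrier (Ls k)\<rbrakk> \<Longrightarrow> lproj i (Gen c) = z"
  using mem_other_carrier_iff by simp

lemma upper_proj_Gen_other:
  "\<lbrakk>i \<in> I; k \<in> I; i \<noteq> k; c \<in> carrier (Ls k)\<rbrakk>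
   \<Longrightarrow> uproj i (Gen c) = (if c = z then Some z else None)"
  using mem_other_carrier_iff by simp

lemma lower_proj_Gen_ops:
  assumes i: "i \<in> I" and k: "k \<in> I" and ab: "a \<in> carrier (Ls k)" "b \<in> carrier (Ls k)"
  shows "lproj i (Join (Gen a) (Gen b)) = lproj i (Gen (a \<squnion>\<^bsub>Ls k\<^esub> b))"
    and "lproj i (Meet (Gen a) (Gen b)) = lproj i (Gen (a \<sqinter>\<^bsub>Ls k\<^esub> b))"
proof -
  interpret K: zero_lattice "Ls k" z using k by (rule zero_lattice_component)
  interpret L: zero_lattice "Ls i" z using i by (rule zero_lattice_component)
  show "lproj i (Join (Gen a) (Gen b)) = lproj i (Gen (a \<squnion>\<^bsub>Ls k\<^esub> b))"
    and "lproj i (Meet (Gen a) (Gen b)) = lproj i (Gen (a \<sqinter>\<^bsub>Ls k\<^esub> b))"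
    using ab lower_proj_Gen_other[OF i k] by (cases "i = k"; simp)+
qed

lemma upper_proj_Join_Gen:
  assumes i: "i \<in> I" and k: "k \<in> I" and ab: "a \<in> carrier (Ls k)" "b \<in> carrier (Ls k)"
  shows "uproj i (Join (Gen a) (Gen b)) = uproj i (Gen (a \<squnion>\<^bsub>Ls k\<^esub> b))"
proof -
  interpret K: zero_lattice "Ls k" z using k by (rule zero_lattice_component)
  show ?thesis
  proof (cases "i = k")
    case True
    with ab show ?thesis by (simp add: ojoin_def)
  next
    case False
    interpret L: zero_lattice "Ls i" z using i by (rule zero_lattice_component)
    from ab show ?thesis
      using upper_proj_Gen_other[OF i k False] K.join_eq_zero_iff[OF ab] by (simp add: ojoin_def)
  qed
qed

lemma ex_omeet_Gen_eq_zero_iff: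
  assumes k: "k \<in> I" and ab: "a \<in> carrier (Ls k)" "b \<in> carrier (Ls k)"
  shows "(\<exists>j\<in>I. omeet (Ls j) (uproj j (Gen a)) (uproj j (Gen b)) = Some z) \<longleftrightarrow> a \<sqinter>\<^bsub>Ls k\<^esub> b = z"
proof
  interpret K: zero_lattice "Ls k" z using k by (rule zero_lattice_component)
  assume "\<exists>j\<in>I. omeet (Ls j) (uproj j (Gen a)) (uproj j (Gen b)) = Some z"
  then obtain j where j: "j \<in> I" "omeet (Ls j) (uproj j (Gen a)) (uproj j (Gen b)) = Some z" ..
  show "a \<sqinter>\<^bsub>Ls k\<^esub> b = z"
  proof (cases "j = k")
    case True
    with j ab show ?thesis by (simp add: omeet_def)
  next
    case False
    with j ab have "a = z \<or> b = z"
      using upper_proj_Gen_other[OF j(1) k False] by (auto simp: omeet_def split: if_splits)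
    with ab show ?thesis by auto
  qed
next
  assume "a \<sqinter>\<^bsub>Ls k\<^esub> b = z"
  with k ab show "\<exists>j\<in>I. omeet (Ls j) (uproj j (Gen a)) (uproj j (Gen b)) = Some z"
    by (intro bexI[of _ k]) (simp_all add: omeet_def)
qed

lemma upper_proj_Meet_Gen:
  assumes i: "i \<in> I" and k: "k \<in> I" and ab: "a \<in> carrier (Ls k)" "b \<in> carrier (Ls k)"
  shows "uproj i (Meet (Gen a) (Gen b)) = uproj i (Gen (a \<sqinter>\<^bsub>Ls k\<^esub> b))"
proof -
  interpret K: zero_lattice "Ls k" z using k by (rule zero_lattice_component)
  have "uproj i (Meet (Gen a) (Gen b)) = (if a \<sqinter>\<^bsub>Ls k\<^esub> b = z then Some z
      else omeet (Ls i) (uproj i (Gen a)) (uproj i (Gen b)))"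
    by (simp only: upper_proj.simps(3) ex_omeet_Gen_eq_zero_iff[OF k ab])
  also have "\<dots> = uproj i (Gen (a \<sqinter>\<^bsub>Ls k\<^esub> b))"
  proof (cases "i = k")
    case True
    with ab show ?thesis by (simp add: omeet_def)
  next
    case False
    with ab show ?thesis
      using upper_proj_Gen_other[OF i k False] by (auto simp: omeet_def)
  qed
  finally show ?thesis .
qed

lemma upper_proj_refl: "i \<in> I \<Longrightarrow> bar_le (Ls i) (uproj i x) (uproj i x)"
  by (rule zero_lattice.bar_le_refl[OF zero_lattice_component upper_proj_closed])

lemma lower_proj_mono:
  assumes "s \<preceq> t" and i: "i \<in> I"
  shows "lproj i s \<sqsubseteq>\<^bsub>Ls i\<^esub> lproj i t"
proof -
  interpret zero_lattice "Ls i" z using i by (rule zero_lattice_component)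
  note closed = lower_proj_closed
  from assms(1) show ?thesis
  proof induction
    case (trans s t u)
    from trans.IH show ?case by (rule le_trans[OF _ _ closed closed closed])
  next
    case (gen_join1 k a b)
    show ?case unfolding lower_proj_Gen_ops(1)[OF i gen_join1] by (rule le_refl[OF closed])
  next
    case (gen_join2 k a b)
    show ?case unfolding lower_proj_Gen_ops(1)[OF i gen_join2] by (rule le_refl[OF closed])
  next
    case (gen_meet1 k a b)
    show ?case unfolding lower_proj_Gen_ops(2)[OF i gen_meet1] by (rule le_refl[OF closed])
  next
    case (gen_meet2 k a b)
    show ?case unfolding lower_proj_Gen_ops(2)[OF i gen_meet2] by (rule le_refl[OF closed])
  qed (simp_all add: closed zero_le join_left join_right join_le meet_left meet_right meet_le)
qed

lemma upper_proj_mono: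
  assumes "s \<preceq> t" and "i \<in> I"
  shows "bar_le (Ls i) (uproj i s) (uproj i t)"
  using assms
proof (induction arbitrary: i)
  case (trans s t u)
  then show ?case
    by (meson zero_lattice.bar_le_trans[OF zero_lattice_component] upper_proj_closed)
next
  case (join_lub s u t)
  then show ?case
    using zero_lattice.ojoin_least[OF zero_lattice_component] upper_proj_closed by simp
next
  case (meet_lb1 s t)
  then show ?case
    using zero_lattice.zero_bar_le[OF zero_lattice_component]
      zero_lattice.omeet_lower(1)[OF zero_lattice_component] upper_proj_closed by simp
next
  case (meet_lb2 s t)
  then show ?case
    using zero_lattice.zero_bar_le[OF zero_lattice_component]
      zero_lattice.omeet_lower(2)[OF zero_lattice_component] upper_proj_closed by simp
next
  case (meet_glb u s t)
  show ?case
  proof (cases "\<exists>j\<in>I. omeet (Ls j) (uproj j s) (uproj j t) = Some z")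
    case True
    then obtain j where j: "j \<in> I" "omeet (Ls j) (uproj j s) (uproj j t) = Some z" ..
    interpret J: zero_lattice "Ls j" z using j(1) by (rule zero_lattice_component)
    have "bar_le (Ls j) (uproj j u) (Some z)"
      using J.omeet_greatest[OF meet_glb.IH[OF j(1)]] upper_proj_closed j by simp
    then have "uproj j u = Some z"
      using J.bar_le_zero_iff upper_proj_closed j(1) by blast
    then have "uproj i u = Some z"
      using upper_proj_eq_zero_transfer meet_glb.prems j(1) by blast
    with True meet_glb.prems show ?thesis by (simp add: zero_lattice.zero_le[OF zero_lattice_component])
  next
    case False
    with meet_glb show ?thesis
      using zero_lattice.omeet_greatest[OF zero_lattice_component] upper_proj_closed by simp
  qed
next
  case (gen_join1 k a b)
  show ?case unfolding upper_proj_Join_Gen[OF gen_join1.prems gen_join1.hyps]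
    using gen_join1.prems by (rule upper_proj_refl)
next
  case (gen_join2 k a b)
  show ?case unfolding upper_proj_Join_Gen[OF gen_join2.prems gen_join2.hyps]
    using gen_join2.prems by (rule upper_proj_refl)
next
  case (gen_meet1 k a b)
  show ?case unfolding upper_proj_Meet_Gen[OF gen_meet1.prems gen_meet1.hyps]
    using gen_meet1.prems by (rule upper_proj_refl)
next
  case (gen_meet2 k a b)
  show ?case unfolding upper_proj_Meet_Gen[OF gen_meet2.prems gen_meet2.hyps]
    using gen_meet2.prems by (rule upper_proj_refl)
qed (simp_all add: upper_proj_refl upper_proj_closed zero_lattice.ojoin_upper[OF zero_lattice_component]
    zero_lattice.zero_bar_le[OF zero_lattice_component])

lemma cop_le_Gen_iff:
  assumes i: "i \<in> I" and ab: "a \<in> carrier (Ls i)" "b \<in> carrier (Ls i)"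
  shows "Gen a \<preceq> Gen b \<longleftrightarrow> a \<sqsubseteq>\<^bsub>Ls i\<^esub> b"
proof
  assume "Gen a \<preceq> Gen b"
  from lower_proj_mono[OF this i] ab show "a \<sqsubseteq>\<^bsub>Ls i\<^esub> b" by simp
next
  interpret zero_lattice "Ls i" z using i by (rule zero_lattice_component)
  assume "a \<sqsubseteq>\<^bsub>Ls i\<^esub> b"
  then have "a = a \<sqinter>\<^bsub>Ls i\<^esub> b" using le_iff_join[OF ab] by simp
  then have "Gen a \<preceq> Meet (Gen a) (Gen b)" using cop_le.gen_meet1[where Ls=Ls and z=z, OF i ab] by simp
  also have "Meet (Gen a) (Gen b) \<preceq> Gen b" by (rule cop_le.meet_lb2)
  finally show "Gen a \<preceq> Gen b" .
qed

lemma Gen_lower_proj_le: "i \<in> I \<Longrightarrow> Gen (lproj i x) \<preceq> x"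
proof (induction x)
  case (Gen a)
  then show ?case by (simp add: cop_le.refl cop_le.zero_least)
next
  case (Join x y)
  have "Gen (lproj i (Join x y)) \<preceq> Join (Gen (lproj i x)) (Gen (lproj i y))"
    using cop_le.gen_join1[where Ls=Ls and z=z, OF Join.prems] lower_proj_in_carrier[OF Join.prems]
    by simp
  also have "\<dots> \<preceq> Join x y" using Join by (simp add: cop_le_Join_mono)
  finally show ?case .
next
  case (Meet x y)
  have "Gen (lproj i (Meet x y)) \<preceq> Meet (Gen (lproj i x)) (Gen (lproj i y))"
    using cop_le.gen_meet1[where Ls=Ls and z=z, OF Meet.prems] lower_proj_in_carrier[OF Meet.prems]
    by simp
  also have "\<dots> \<preceq> Meet x y" using Meet by (simp add: cop_le_Meet_mono)
  finally show ?case .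
qed

lemma Gen_le_iff_le_lower_proj:
  assumes i: "i \<in> I" and b: "b \<in> carrier (Ls i)"
  shows "Gen b \<preceq> x \<longleftrightarrow> b \<sqsubseteq>\<^bsub>Ls i\<^esub> lproj i x"
proof
  assume "Gen b \<preceq> x"
  from lower_proj_mono[OF this i] b show "b \<sqsubseteq>\<^bsub>Ls i\<^esub> lproj i x" by simp
next
  assume "b \<sqsubseteq>\<^bsub>Ls i\<^esub> lproj i x"
  then have "Gen b \<preceq> Gen (lproj i x)"
    using cop_le_Gen_iff[OF i b lower_proj_in_carrier[OF i]] by simp
  also have "\<dots> \<preceq> x" using i by (rule Gen_lower_proj_le)
  finally show "Gen b \<preceq> x" .
qed

lemma cop_le_top_Join_ojoin:
  assumes j: "j \<in> I" and uv: "u \<in> bar_carrier (Ls j)" "v \<in> bar_carrier (Ls j)"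
    and "cop_le_top I Ls z x u" "cop_le_top I Ls z y v"
  shows "cop_le_top I Ls z (Join x y) (ojoin (Ls j) u v)"
proof (cases "\<exists>a b. u = Some a \<and> v = Some b")
  case True
  then obtain a b where ab: "u = Some a" "v = Some b" by blast
  with assms have "Join x y \<preceq> Join (Gen a) (Gen b)"
    by (simp add: cop_le_top_def cop_le_Join_mono)
  also have "\<dots> \<preceq> Gen (a \<squnion>\<^bsub>Ls j\<^esub> b)"
    using cop_le.gen_join2[where Ls=Ls and z=z, OF j] uv ab by simp
  finally show ?thesis using ab by (simp add: cop_le_top_def ojoin_def)
next
  case False
  then have "ojoin (Ls j) u v = None" by (auto simp: ojoin_def split: option.splits)
  then show ?thesis by (simp add: cop_le_top_def)
qed

lemma cop_le_top_Meet_omeet: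
  assumes j: "j \<in> I" and uv: "u \<in> bar_carrier (Ls j)" "v \<in> bar_carrier (Ls j)"
    and x: "cop_le_top I Ls z x u" and y: "cop_le_top I Ls z y v"
  shows "cop_le_top I Ls z (Meet x y) (omeet (Ls j) u v)"
proof (cases u)
  case None
  with y show ?thesis
    by (cases v) (auto simp: cop_le_top_def omeet_def intro: cop_le.trans[OF cop_le.meet_lb2])
next
  case (Some a)
  show ?thesis
  proof (cases v)
    case None
    with x Some show ?thesis by (auto simp: cop_le_top_def omeet_def intro: cop_le.trans[OF cop_le.meet_lb1])
  next
    case (Some b)
    with x y \<open>u = Some a\<close> have "Meet x y \<preceq> Meet (Gen a) (Gen b)"
      by (simp add: cop_le_top_def cop_le_Meet_mono)
    also have "\<dots> \<preceq> Gen (a \<sqinter>\<^bsub>Ls j\<^esub> b)"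
      using cop_le.gen_meet2[where Ls=Ls and z=z, OF j] uv Some \<open>u = Some a\<close> by simp
    finally show ?thesis using Some \<open>u = Some a\<close> by (simp add: cop_le_top_def omeet_def)
  qed
qed

lemma le_upper_proj: "i \<in> I \<Longrightarrow> cop_le_top I Ls z x (uproj i x)"
proof (induction x arbitrary: i)
  case (Gen a)
  then show ?case by (simp add: cop_le_top_def cop_le.refl)
next
  case (Join x y)
  then show ?case by (simp add: cop_le_top_Join_ojoin upper_proj_closed)
next
  case (Meet x y)
  show ?case
  proof (cases "\<exists>j\<in>I. omeet (Ls j) (uproj j x) (uproj j y) = Some z")
    case True
    then obtain j where "j \<in> I" "omeet (Ls j) (uproj j x) (uproj j y) = Some z" ..
    with Meet.IH have "cop_le_top I Ls z (Meet x y) (Some z)"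
      by (metis cop_le_top_Meet_omeet upper_proj_closed)
    with True show ?thesis by simp
  next
    case False
    with Meet show ?thesis by (simp add: cop_le_top_Meet_omeet upper_proj_closed)
  qed
qed

lemma cop_le_top_iff_bar_le_upper_proj:
  assumes i: "i \<in> I" and v: "v \<in> bar_carrier (Ls i)"
  shows "cop_le_top I Ls z x v \<longleftrightarrow> bar_le (Ls i) (uproj i x) v"
proof (cases v)
  case None
  then show ?thesis by (simp add: cop_le_top_def)
next
  case (Some b)
  with v have b: "b \<in> carrier (Ls i)" by simp
  show ?thesis
  proof
    assume "cop_le_top I Ls z x v"
    with Some have "x \<preceq> Gen b" by (simp add: cop_le_top_def)
    from upper_proj_mono[OF this i] Some b show "bar_le (Ls i) (uproj i x) v" by simp
  next
    assume "bar_le (Ls i) (uproj i x) v"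
    with Some obtain a where a: "uproj i x = Some a" "a \<sqsubseteq>\<^bsub>Ls i\<^esub> b"
      by (cases "uproj i x") auto
    have "x \<preceq> Gen a" using le_upper_proj[OF i, of x] a(1) by (simp add: cop_le_top_def)
    also have "Gen a \<preceq> Gen b"
      using cop_le_Gen_iff[OF i _ b] upper_proj_closed[OF i, of x] a by simp
    finally show "cop_le_top I Ls z x v" using Some by (simp add: cop_le_top_def)
  qed
qed

lemma ole_top_iff_bar_le:
  assumes i: "i \<in> I" and uv: "u \<in> bar_carrier (Ls i)" "v \<in> bar_carrier (Ls i)"
  shows "ole_top I Ls z u v \<longleftrightarrow> bar_le (Ls i) u v"
  using uv cop_le_Gen_iff[OF i] by (cases u; cases v) (simp_all add: ole_top_def)

lemma is_lower_proj_iff: "i \<in> I \<Longrightarrow> is_lower_proj I Ls z i x a \<longleftrightarrow> a = lproj i x"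
proof -
  assume i: "i \<in> I"
  interpret zero_lattice "Ls i" z using i by (rule zero_lattice_component)
  show ?thesis
    unfolding is_lower_proj_def
    using Gen_le_iff_le_lower_proj[OF i] cop_le_Gen_iff[OF i] lower_proj_closed
    by (auto intro: le_antisym)
qed

lemma is_upper_proj_iff: "i \<in> I \<Longrightarrow> is_upper_proj I Ls z i x u \<longleftrightarrow> u = uproj i x"
proof -
  assume i: "i \<in> I"
  interpret zero_lattice "Ls i" z using i by (rule zero_lattice_component)
  have U: "uproj i x \<in> bar_carrier (Ls i)" using i by (rule upper_proj_closed)
  have "is_upper_proj I Ls z i x u \<longleftrightarrow> u \<in> bar_carrier (Ls i) \<and> bar_le (Ls i) (uproj i x) u \<and>
      (\<forall>v\<in>bar_carrier (Ls i). bar_le (Ls i) (uproj i x) v \<longrightarrow> bar_le (Ls i) u v)"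
    unfolding is_upper_proj_def
    using cop_le_top_iff_bar_le_upper_proj[OF i] ole_top_iff_bar_le[OF i] by auto
  also have "\<dots> \<longleftrightarrow> u = uproj i x"
    using U bar_le_refl bar_le_antisym by blast
  finally show ?thesis .
qed

end

theorem lemma4p1:
  fixes I :: "'i set" and Ls :: "'i \<Rightarrow> 'a gorder" and z :: 'a
  assumes lat: "\<And>i. i \<in> I \<Longrightarrow> lattice (Ls i)"
    and zero: "\<And>i. i \<in> I \<Longrightarrow> least (Ls i) z (carrier (Ls i))"
    and disj: "\<And>i j. i \<in> I \<Longrightarrow> j \<in> I \<Longrightarrow> i \<noteq> j \<Longrightarrow> carrier (Ls i) \<inter> carrier (Ls j) = {z}"
  shows "(\<forall>i\<in>I. \<forall>x\<in>cop_terms I Ls z.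
           (\<exists>a. is_lower_proj I Ls z i x a) \<and> (\<exists>u. is_upper_proj I Ls z i x u))
     \<and> (\<forall>lo up.
         (\<forall>i\<in>I. \<forall>x\<in>cop_terms I Ls z. is_lower_proj I Ls z i x (lo i x)) \<and>
         (\<forall>i\<in>I. \<forall>x\<in>cop_terms I Ls z. is_upper_proj I Ls z i x (up i x)) \<longrightarrow>
         (\<forall>i\<in>I. \<forall>p\<in>carrier (Ls i). lo i (Gen p) = p \<and> up i (Gen p) = Some p)
       \<and> (\<forall>i\<in>I. \<forall>p\<in>(\<Union>j\<in>I. carrier (Ls j)) - carrier (Ls i). lo i (Gen p) = z \<and> up i (Gen p) = None)
       \<and> (\<forall>i\<in>I. \<forall>x\<in>cop_terms I Ls z. \<forall>y\<in>cop_terms I Ls z.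
             lo i (Join x y) = lo i x \<squnion>\<^bsub>Ls i\<^esub> lo i y \<and> lo i (Meet x y) = lo i x \<sqinter>\<^bsub>Ls i\<^esub> lo i y)
       \<and> (\<forall>i\<in>I. \<forall>x\<in>cop_terms I Ls z. \<forall>y\<in>cop_terms I Ls z.
             up i (Join x y) = ojoin (Ls i) (up i x) (up i y))
       \<and> (\<forall>i\<in>I. \<forall>x\<in>cop_terms I Ls z. \<forall>y\<in>cop_terms I Ls z.
             up i (Meet x y) = (if \<exists>j\<in>I. omeet (Ls j) (up j x) (up j y) = Some z then Some z
                                else omeet (Ls i) (up i x) (up i y))))"
proof -
  interpret zero_lattice_family I Ls z
    using lat zero disj by (simp add: zero_lattice_family_def)
  have Gen_in_cop_terms: "\<And>j p. \<lbrakk>j \<in> I; p \<in> carrier (Ls j)\<rbrakk> \<Longrightarrow> Gen p \<in> cop_terms I Ls z"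
    and Join_Meet_in_cop_terms: "\<And>x y. Join x y \<in> cop_terms I Ls z \<longleftrightarrow> x \<in> cop_terms I Ls z \<and> y \<in> cop_terms I Ls z"
      "\<And>x y. Meet x y \<in> cop_terms I Ls z \<longleftrightarrow> x \<in> cop_terms I Ls z \<and> y \<in> cop_terms I Ls z"
    by (auto simp: cop_terms_def cop_gens_def)
  show ?thesis
    using Gen_in_cop_terms by (auto simp: is_lower_proj_iff is_upper_proj_iff Join_Meet_in_cop_terms)
qed

end
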